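(* Let $(S,d)$ be a metric space and let $P$ be a non-empty subset of $S$ with the induced metric. If $f\in\mathrm{BL}(P)$ and $g\in\mathrm{BL}(S)$ are such that $|f\vee g|_P|_L=|f|_L$ and $|f\vee g|_P|_L\ge|g|_L$, then $$\mathcal{E}^{S,0}_P(f\vee g|_P)\vee g=\mathcal{E}^{S,0}_P(f)\vee g.$$
   Context: $\mathrm{BL}(T)$ is the space of bounded real-valued Lipschitz functions on a metric space $T$, $|f|_L=\sup_{x\neq y}|f(x)-f(y)|/d(x,y)$ (with $|f|_L=0$ on a singleton), $\vee$ denotes pointwise maximum, and $g|_P$ is the restriction of $g$ to $P$. For $f\in\mathrm{BL}(P)$, $\mathcal{E}^{S,0}_P f(x)=\sup_{p\in P}[f(p)-|f|_L d(p,x)]$ for $x\in S$. *)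

theory Defs
  imports "HOL-Analysis.Analysis"
begin

text \<open>Functions on a subset P of a metric space are represented as total functions
  'a => real whose values outside P are irrelevant.\<close>

definition BL :: "'a::metric_space set \<Rightarrow> ('a \<Rightarrow> real) \<Rightarrow> bool" where
  "BL P f \<longleftrightarrow> bounded (f ` P) \<and>
     (\<exists>L. \<forall>x\<in>P. \<forall>y\<in>P. \<bar>f x - f y\<bar> \<le> L * dist x y)"

definition lip_const :: "'a::metric_space set \<Rightarrow> ('a \<Rightarrow> real) \<Rightarrow> real" where
  "lip_const P f =
     (if \<exists>x\<in>P. \<exists>y\<in>P. x \<noteq> y
      then (SUP xy\<in>{(x,y). x \<in> P \<and> y \<in> P \<and> x \<noteq> y}.
              \<bar>f (fst xy) - f (snd xy)\<bar> / dist (fst xy) (snd xy))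
      else 0)"

definition ext0 :: "'a::metric_space set \<Rightarrow> ('a \<Rightarrow> real) \<Rightarrow> 'a \<Rightarrow> real" where
  "ext0 P f x = (SUP p\<in>P. f p - lip_const P f * dist p x)"

end

theory Submission
  imports Defs
begin

text \<open>With \<open>L = lip_const P f\<close>, both extensions are suprema over \<open>P\<close> of
  \<open>p \<mapsto> h p - L * dist p x\<close>, and for \<open>h = max f g\<close> that supremum splits into the one for \<open>f\<close>
  and the one for \<open>g\<close>. Since \<open>lip_const UNIV g \<le> L\<close>, every term \<open>g p - L * dist p x\<close> is at
  most \<open>g x\<close>, so the \<open>g\<close>-part disappears after taking the maximum with \<open>g x\<close>.\<close>

lemma lip_const_bound:
  assumes "BL P f" "x \<in> P" "y \<in> P"
  shows "\<bar>f x - f y\<bar> \<le> lip_const P f * dist x y"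
proof (cases "x = y")
  case False
  let ?S = "{(x,y). x \<in> P \<and> y \<in> P \<and> x \<noteq> y}"
  let ?r = "\<lambda>xy. \<bar>f (fst xy) - f (snd xy)\<bar> / dist (fst xy) (snd xy)"
  obtain M where M: "\<forall>x\<in>P. \<forall>y\<in>P. \<bar>f x - f y\<bar> \<le> M * dist x y"
    using assms(1) unfolding BL_def by auto
  have "bdd_above (?r ` ?S)"
    by (rule bdd_aboveI2[where M = M]) (use M in \<open>auto simp: divide_le_eq\<close>)
  then have "?r (x, y) \<le> (SUP xy\<in>?S. ?r xy)"
    by (rule cSUP_upper[rotated]) (use assms False in auto)
  also have "\<dots> = lip_const P f"
    unfolding lip_const_def using assms False by auto
  finally show ?thesis
    using False by (simp add: divide_le_eq)
qed simp

lemma lip_const_nonneg: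
  assumes "BL P f"
  shows "0 \<le> lip_const P f"
proof (cases "\<exists>x\<in>P. \<exists>y\<in>P. x \<noteq> y")
  case True
  then obtain x y where "x \<in> P" "y \<in> P" "x \<noteq> y" by blast
  with lip_const_bound[OF assms] have "0 \<le> lip_const P f * dist x y"
    by (meson abs_ge_zero order_trans)
  with \<open>x \<noteq> y\<close> show ?thesis
    by (simp add: zero_le_mult_iff)
qed (simp add: lip_const_def)

lemma ext0_eq_SUP:
  "ext0 P f x = (SUP p\<in>P. f p - lip_const P f * dist p x)"
  by (simp add: ext0_def)

lemma bdd_above_ext0_terms:
  assumes "BL P f" "0 \<le> L"
  shows "bdd_above ((\<lambda>p. f p - L * dist p x) ` P)"
proof -
  obtain M where "\<forall>p\<in>P. \<bar>f p\<bar> \<le> M"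
    using assms(1) unfolding BL_def bounded_iff by auto
  then show ?thesis
    using assms(2) by (intro bdd_aboveI2[where M = M]) (smt (verit) mult_nonneg_nonneg zero_le_dist)
qed

lemma max_SUP_max_absorb:
  fixes a b :: "'a \<Rightarrow> real"
  assumes "P \<noteq> {}" "bdd_above (a ` P)" "\<And>p. p \<in> P \<Longrightarrow> b p \<le> t"
  shows "max (SUP p\<in>P. max (a p) (b p)) t = max (SUP p\<in>P. a p) t"
proof -
  obtain M where "\<And>p. p \<in> P \<Longrightarrow> a p \<le> M"
    using assms(2) by (auto simp: bdd_above_def)
  then have bdd_max: "bdd_above ((\<lambda>p. max (a p) (b p)) ` P)"
    using assms(3) by (intro bdd_aboveI2[where M = "max M t"] max.mono)
  have upper: "(SUP p\<in>P. max (a p) (b p)) \<le> max (SUP p\<in>P. a p) t"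
  proof (rule cSUP_least[OF assms(1)])
    fix p assume "p \<in> P"
    then have "a p \<le> (SUP p\<in>P. a p)" "b p \<le> t"
      using assms(2,3) by (auto intro: cSUP_upper)
    then show "max (a p) (b p) \<le> max (SUP p\<in>P. a p) t"
      by (rule max.mono)
  qed
  have "(SUP p\<in>P. a p) \<le> (SUP p\<in>P. max (a p) (b p))"
    using assms(1) bdd_max by (intro cSUP_mono) (auto intro: max.cobounded1)
  with upper show ?thesis
    by linarith
qed

theorem corollary4p4:
  fixes P :: "'a::metric_space set" and f g :: "'a \<Rightarrow> real"
  assumes "P \<noteq> {}"
    and "BL P f" and "BL UNIV g"
    and "lip_const P (\<lambda>x. max (f x) (g x)) = lip_const P f"
    and "lip_const P (\<lambda>x. max (f x) (g x)) \<ge> lip_const UNIV g"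
  shows "\<forall>x. max (ext0 P (\<lambda>y. max (f y) (g y)) x) (g x) = max (ext0 P f x) (g x)"
proof
  fix x
  define L where "L = lip_const P f"
  have "0 \<le> L"
    unfolding L_def using lip_const_nonneg[OF assms(2)] .
  have g_term_le: "g p - L * dist p x \<le> g x" for p
  proof -
    have "lip_const UNIV g * dist p x \<le> L * dist p x"
      using assms(4,5) by (simp add: L_def mult_right_mono)
    then show ?thesis
      using lip_const_bound[OF assms(3), of p x] by simp
  qed
  have "max (ext0 P (\<lambda>y. max (f y) (g y)) x) (g x)
      = max (SUP p\<in>P. max (f p - L * dist p x) (g p - L * dist p x)) (g x)"
    by (simp add: ext0_eq_SUP assms(4) L_def max_diff_distrib_left)
  also have "\<dots> = max (ext0 P f x) (g x)"
    unfolding ext0_eq_SUP L_def[symmetric]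
    using assms(1) bdd_above_ext0_terms[OF assms(2) \<open>0 \<le> L\<close>] g_term_le
    by (rule max_SUP_max_absorb)
  finally show "max (ext0 P (\<lambda>y. max (f y) (g y)) x) (g x) = max (ext0 P f x) (g x)" .
qed

end
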